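(* Let $\mathcal X\subset\mathbb R^d$ be finite, let $d$ denote Euclidean distance, and let $C=\{C_1,\dots,C_k\}$ be a center-based clustering of $\mathcal X$ whose centers $\mu_1,\dots,\mu_k$ are the centers of mass of the clusters, $\mu_i=\frac1{|C_i|}\sum_{x\in C_i}x$. Assume $C$ satisfies the $\gamma$-margin property. Fix $i\in[k]$ and $\epsilon\ge 0$, and let $\mu_i'\in\mathbb R^d$ be any point with $d(\mu_i,\mu_i')\le r(C_i)\,\epsilon$, where $r(C_i)=\max_{x\in C_i}d(x,\mu_i)$. If $\gamma\ge 1+2\epsilon$, then for all $x\in C_i$ and all $y\in\mathcal X\setminus C_i$ we have $d(x,\mu_i')<d(y,\mu_i')$.
   Context: A clustering $C=\{C_1,\dots,C_k\}$ of $\mathcal X$ is center-based with centers $\mu_1,\dots,\mu_k$ if for every $x\in\mathcal X$ and $i\le k$: $x\in C_i \iff i=\arg\min_j d(x,\mu_j)$. Such a clustering satisfies the $\gamma$-margin property if for all $i\in[k]$, every $x\in C_i$ and every $y\in\mathcal X\setminus C_i$: $\gamma\, d(x,\mu_i)<d(y,\mu_i)$. *)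

theory Defs
  imports "HOL-Analysis.Analysis"
begin

definition is_clustering :: "'a set \<Rightarrow> nat \<Rightarrow> (nat \<Rightarrow> 'a set) \<Rightarrow> bool" where
  "is_clustering X k C \<longleftrightarrow>
     (\<forall>i<k. C i \<noteq> {} \<and> C i \<subseteq> X) \<and>
     (\<forall>i<k. \<forall>j<k. i \<noteq> j \<longrightarrow> C i \<inter> C j = {}) \<and>
     (\<Union>i<k. C i) = X"

definition center_based ::
  "('a::metric_space) set \<Rightarrow> nat \<Rightarrow> (nat \<Rightarrow> 'a set) \<Rightarrow> (nat \<Rightarrow> 'a) \<Rightarrow> bool" where
  "center_based X k C mu \<longleftrightarrow>
     (\<forall>x\<in>X. \<forall>i<k. x \<in> C i \<longleftrightarrow> (\<forall>j<k. j \<noteq> i \<longrightarrow> dist x (mu i) < dist x (mu j)))"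

definition gamma_margin ::
  "real \<Rightarrow> ('a::metric_space) set \<Rightarrow> nat \<Rightarrow> (nat \<Rightarrow> 'a set) \<Rightarrow> (nat \<Rightarrow> 'a) \<Rightarrow> bool" where
  "gamma_margin \<gamma> X k C mu \<longleftrightarrow>
     (\<forall>i<k. \<forall>x\<in>C i. \<forall>y\<in>X - C i. \<gamma> * dist x (mu i) < dist y (mu i))"

definition center_of_mass :: "('a::real_vector) set \<Rightarrow> 'a" where
  "center_of_mass A = (1 / real (card A)) *\<^sub>R (\<Sum>x\<in>A. x)"

definition cluster_radius :: "('a::metric_space) set \<Rightarrow> 'a \<Rightarrow> real" where
  "cluster_radius A m = Max ((\<lambda>x. dist x m) ` A)"

end

theory Submission
  imports Defs
begin

text \<open>Moving the centre by at most \<open>\<epsilon> r\<close> changes every distance by at most \<open>\<epsilon> r\<close>, so points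
  of the cluster stay within \<open>(1 + \<epsilon>) r\<close> of the new centre while every outside point, being
  farther than \<open>\<gamma> r \<ge> (1 + 2\<epsilon>) r\<close> from the old one, stays farther than \<open>(1 + \<epsilon>) r\<close>.\<close>

lemma dist_less_after_center_shift:
  fixes x y m m' :: "'a::metric_space"
  assumes "dist x m \<le> r" and "\<gamma> * r < dist y m"
    and "0 \<le> r" and "1 + 2 * \<epsilon> \<le> \<gamma>" and "dist m m' \<le> r * \<epsilon>"
  shows "dist x m' < dist y m'"
proof -
  have "dist x m' \<le> dist x m + dist m m'" by (rule dist_triangle)
  moreover have "dist y m \<le> dist y m' + dist m m'" by (metis dist_commute dist_triangle)
  moreover have "(1 + 2 * \<epsilon>) * r \<le> \<gamma> * r" using assms(3,4) by (rule mult_right_mono[rotated])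
  ultimately show ?thesis using assms(1,2,5) by (simp add: algebra_simps)
qed

lemma cluster_radius_ge:
  assumes "finite A" and "x \<in> A"
  shows "dist x m \<le> cluster_radius A m"
  unfolding cluster_radius_def using assms by (intro Max_ge) auto

lemma cluster_radius_attained:
  assumes "finite A" and "A \<noteq> {}"
  obtains z where "z \<in> A" and "cluster_radius A m = dist z m"
proof -
  have "cluster_radius A m \<in> (\<lambda>x. dist x m) ` A"
    unfolding cluster_radius_def using assms by (intro Max_in) auto
  then show ?thesis using that by auto
qed

theorem lemma1:
  fixes X :: "'a::euclidean_space set"
    and k :: nat and C :: "nat \<Rightarrow> 'a set" and mu :: "nat \<Rightarrow> 'a"
    and \<gamma> \<epsilon> :: real and i :: nat and mu' :: 'a
  assumes "finite X"
    and "is_clustering X k C"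
    and "center_based X k C mu"
    and "\<forall>j<k. mu j = center_of_mass (C j)"
    and "gamma_margin \<gamma> X k C mu"
    and "i < k"
    and "\<epsilon> \<ge> 0"
    and "dist (mu i) mu' \<le> cluster_radius (C i) (mu i) * \<epsilon>"
    and "\<gamma> \<ge> 1 + 2 * \<epsilon>"
  shows "\<forall>x\<in>C i. \<forall>y\<in>X - C i. dist x mu' < dist y mu'"
proof (intro ballI)
  fix x y assume x: "x \<in> C i" and y: "y \<in> X - C i"
  have "C i \<noteq> {}" and "C i \<subseteq> X"
    using assms(2,6) unfolding is_clustering_def by auto
  then have fin: "finite (C i)" using assms(1) finite_subset by blast
  then obtain z where z: "z \<in> C i" and r: "cluster_radius (C i) (mu i) = dist z (mu i)"
    using \<open>C i \<noteq> {}\<close> by (rule cluster_radius_attained)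
  have "\<gamma> * cluster_radius (C i) (mu i) < dist y (mu i)"
    using assms(5,6) z y r unfolding gamma_margin_def by auto
  moreover have "0 \<le> cluster_radius (C i) (mu i)" using r by simp
  ultimately show "dist x mu' < dist y mu'"
    using cluster_radius_ge[OF fin x] assms(8,9) by (meson dist_less_after_center_shift)
qed

end
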